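(* Let $\ell$ and $m$ be positive integers with $\ell\le m-2$, let $G$ be an abelian group written additively, let $\mathbf{a}=(a_1,\dots,a_m)$ be a sequence of elements of $G$ with set of distinct terms $A$, and let $X=\{a\in A:\mu_{\mathbf{a}}(a)\ge2\}$. Assume $|X|\ge2$, and assume there exists a positive integer $t\ge2$, being the smallest positive integer with this property, such that $\sum_{i=1}^t\rho_{x_i}(\mathbf{a})\ge\ell+t$ for some $x_1,\dots,x_t\in X$. If \[ |\Sigma^{\ell}(\mathbf{a})|=\sum_{a\in A}\mu_{\mathbf{a}}(a)-\ell+1<\begin{cases}p(G)-1,&\ell=2,\\ p(G),&\ell\ge3,\end{cases} \] then $A$ is an arithmetic progression.
   Context: $p(G)$ is the order of the smallest nontrivial subgroup of $G$, or $\infty$ if none exists. $\Sigma^{\ell}(\mathbf{a})$ is the set of all sums $a_{i_1}+\cdots+a_{i_\ell}$ with $1\le i_1<\cdots<i_\ell\le m$. $\rho_a(\mathbf{a})=|\{i\in[1,m]:a_i=a\}|$ and $\mu_{\mathbf{a}}(a)=\min(\ell,\rho_a(\mathbf{a}))$. An arithmetic progression is a set $\{c+jd:j\in[0,k-1]\}$ with $d\ne0$. *)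

theory Defs
  imports Main "HOL-Library.Extended_Nat"
begin

(* The abelian group G is the whole type 'a :: ab_group_add. *)

definition add_subgroup :: "'a::ab_group_add set \<Rightarrow> bool" where
  "add_subgroup H \<longleftrightarrow> 0 \<in> H \<and> (\<forall>x\<in>H. \<forall>y\<in>H. x - y \<in> H)"

(* p(G): smallest order of a nontrivial subgroup; \<infinity> if none (infinite subgroups have order \<infinity>) *)
definition pG :: "'a::ab_group_add itself \<Rightarrow> enat" where
  "pG _ = (INF H \<in> {H :: 'a set. add_subgroup H \<and> H \<noteq> {0}}.
              (if finite H then enat (card H) else \<infinity>))"

definition rho :: "(nat \<Rightarrow> 'a) \<Rightarrow> nat \<Rightarrow> 'a \<Rightarrow> nat" where
  "rho a m x = card {i \<in> {1..m}. a i = x}"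

definition mu :: "nat \<Rightarrow> (nat \<Rightarrow> 'a) \<Rightarrow> nat \<Rightarrow> 'a \<Rightarrow> nat" where
  "mu l a m x = min l (rho a m x)"

definition Sigma_l :: "nat \<Rightarrow> (nat \<Rightarrow> 'a::comm_monoid_add) \<Rightarrow> nat \<Rightarrow> 'a set" where
  "Sigma_l l a m = {sum a I | I. I \<subseteq> {1..m} \<and> card I = l}"

(* c + j*d written as j-fold iteration of (+ d) applied to c *)
definition arith_prog :: "'a::ab_group_add set \<Rightarrow> bool" where
  "arith_prog S \<longleftrightarrow> (\<exists>c d k. d \<noteq> 0 \<and> S = {((\<lambda>x. x + d) ^^ j) c | j. j < k})"

end

(* Remove one index for each distinct value of a: the remaining subsequence E has all
   multiplicities below l, and A + Sigma^(l-1)(E) is contained in Sigma^l(a), whose assumed size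
   |A| + |E| - l + 1 makes this sum critical.  For l = 2 the set Sigma^1(E) has |E| elements and
   Vosper's theorem applies.  For l >= 3 split off a set W of at least two values of E containing
   every value of multiplicity l - 1; the bound |Sigma^j(J)| >= |J| - j + 1 (Cauchy-Davenport and
   induction on j) applied to the rest Z = Sigma^(l-2)(E') shows that A + W, and W + Z when
   |W| >= 3, are critical as well.  Hence W is an arithmetic progression (by Vosper if |W| >= 3),
   and a critical sum with a progression forces A to be a progression of the same difference.
   Cauchy-Davenport and Vosper hold in any abelian group for sums of size below p(G), by Dyson's
   e-transform: a nonzero period of a set of size below p(G) would generate a subgroup that is
   too small. *)

theory Submission
  imports Defs "HOL-Library.Set_Algebras"
begin

lemma obtain_two_distinct:
  assumes "2 \<le> card S"
  obtains x y where "x \<in> S" "y \<in> S" "x \<noteq> y"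
proof -
  obtain T where "T \<subseteq> S" "card T = 2"
    using obtain_subset_with_card_n[OF assms] by blast
  then show ?thesis using that by (auto simp: card_2_iff)
qed

lemma card_sum_le_card_Un3:
  assumes "finite U1" "finite U2" "finite U3"
  shows "card U1 + card U2 + card U3
    \<le> card (U1 \<union> U2 \<union> U3) + card (U1 \<inter> U2) + card (U1 \<inter> U3) + card (U2 \<inter> U3)"
proof -
  have "card U1 + card U2 = card (U1 \<union> U2) + card (U1 \<inter> U2)"
    using assms by (intro card_Un_Int) simp_all
  moreover have "card (U1 \<union> U2) + card U3 = card (U1 \<union> U2 \<union> U3) + card ((U1 \<union> U2) \<inter> U3)"
    using assms by (intro card_Un_Int) simp_all
  moreover have "card ((U1 \<union> U2) \<inter> U3) \<le> card (U1 \<inter> U3) + card (U2 \<inter> U3)"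
    by (metis Int_Un_distrib2 card_Un_le)
  ultimately show ?thesis by linarith
qed

lemma enat_le_less_trans: "m \<le> n \<Longrightarrow> enat n < p \<Longrightarrow> enat m < p"
  by (rule le_less_trans[of _ "enat n"]) simp_all

lemma enat_Suc_less_if_less_minus_one: "enat n < p - 1 \<Longrightarrow> enat (Suc n) < p"
  by (cases p) (simp_all add: one_enat_def)

fun nsmul :: "nat \<Rightarrow> 'a::monoid_add \<Rightarrow> 'a" where
  "nsmul 0 d = 0"
| "nsmul (Suc j) d = nsmul j d + d"

lemma nsmul_add: "nsmul (i + j) d = nsmul i d + nsmul j d"
  by (induction j) (simp_all add: add.assoc)

lemma nsmul_mult_eq_0: "nsmul r d = 0 \<Longrightarrow> nsmul (r * q) d = 0"
  by (induction q) (simp_all add: nsmul_add)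

lemma nsmul_mod: "nsmul r d = 0 \<Longrightarrow> nsmul (t mod r) d = nsmul t d"
  by (metis add.left_neutral div_mult_mod_eq mult.commute nsmul_add nsmul_mult_eq_0)

lemma funpow_add_right_eq_nsmul: "((\<lambda>x. x + d) ^^ j) c = c + nsmul j d"
  by (induction j) (simp_all add: add.assoc)

lemma elt_set_plus_eq_image: "e +o A = (+) e ` A"
  by (auto simp: elt_set_plus_def)

lemma card_elt_set_plus [simp]:
  fixes e :: "'a::ab_group_add"
  shows "card (e +o A) = card A"
  unfolding elt_set_plus_eq_image by (rule card_image) (simp add: inj_on_def)

lemma finite_elt_set_plus [simp]: "finite A \<Longrightarrow> finite (e +o A)"
  by (simp add: elt_set_plus_eq_image)

lemma set_plus_eq_empty_iff [simp]: "A + B = {} \<longleftrightarrow> A = {} \<or> B = {}"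
  by (auto simp: set_plus_def)

lemma card_le_card_set_plus:
  fixes A B :: "'a::ab_group_add set"
  assumes "finite A" "finite B" "b \<in> B"
  shows "card A \<le> card (A + B)"
proof -
  have "b +o A \<subseteq> A + B"
    using assms(3) by (metis add.commute set_plus_mono3)
  then show ?thesis
    using assms by (metis card_elt_set_plus card_mono finite_set_plus)
qed

lemma card_le_card_set_plus_right:
  fixes A B :: "'a::ab_group_add set"
  assumes "finite A" "finite B" "a \<in> A"
  shows "card B \<le> card (A + B)"
  using card_le_card_set_plus[OF assms(2,1,3)] by (simp add: add.commute)

lemma pG_le_card_subgroup:
  assumes "add_subgroup H" "H \<noteq> {0}" "finite H"
  shows "pG TYPE('a::ab_group_add) \<le> enat (card (H::'a set))"
proof -
  have "pG TYPE('a) \<le> (if finite H then enat (card H) else \<infinity>)"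
    unfolding pG_def by (rule INF_lower) (use assms in auto)
  with assms show ?thesis by simp
qed

lemma add_subgroup_range_nsmul:
  fixes g :: "'a::ab_group_add"
  assumes "nsmul r g = 0" "0 < r"
  shows "add_subgroup (range (\<lambda>j. nsmul j g))"
  unfolding add_subgroup_def
proof (intro conjI ballI)
  show "0 \<in> range (\<lambda>j. nsmul j g)"
    by (metis nsmul.simps(1) rangeI)
  fix x y assume "x \<in> range (\<lambda>j. nsmul j g)" "y \<in> range (\<lambda>j. nsmul j g)"
  then obtain s t where st: "x = nsmul s g" "y = nsmul t g" by blast
  have "t \<le> r * t" using assms(2) by simp
  then have "nsmul (r * t - t) g + nsmul t g = nsmul (r * t) g"
    by (simp flip: nsmul_add)
  also have "\<dots> = 0" using assms(1) by (rule nsmul_mult_eq_0)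
  finally have "nsmul (r * t - t) g = - y"
    by (simp add: st eq_neg_iff_add_eq_0)
  then have "x - y = nsmul (s + (r * t - t)) g"
    by (simp add: st nsmul_add)
  then show "x - y \<in> range (\<lambda>j. nsmul j g)" by simp
qed

lemma pG_le_card_if_orbit_subset:
  fixes g :: "'a::ab_group_add"
  assumes "g \<noteq> 0" "finite Y" "\<And>j. y + nsmul j g \<in> Y"
  shows "pG TYPE('a) \<le> enat (card Y)"
proof -
  let ?H = "range (\<lambda>j. nsmul j g)"
  have "nsmul j g \<in> (- y) +o Y" for j
    using assms(3)[of j] set_minus_plus[of "nsmul j g" "- y" Y] by (simp add: add.commute)
  then have H_sub: "?H \<subseteq> (- y) +o Y" by blast
  then have "finite ?H"
    using assms(2) by (meson finite_elt_set_plus finite_subset)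
  then have "\<not> inj (\<lambda>j. nsmul j g)"
    using finite_imageD infinite_UNIV_nat by blast
  then obtain i j where ij: "i < j" "nsmul i g = nsmul j g"
    unfolding inj_def by (metis linorder_neqE_nat)
  moreover have "nsmul j g = nsmul i g + nsmul (j - i) g"
    using ij(1) nsmul_add[of i "j - i" g] by simp
  ultimately have "nsmul (j - i) g = 0" by simp
  with ij have "add_subgroup ?H"
    by (intro add_subgroup_range_nsmul[of "j - i"]) simp_all
  moreover have "nsmul 1 g \<in> ?H" by (rule rangeI)
  then have "g \<in> ?H" by simp
  then have "?H \<noteq> {0}" using assms(1) by blast
  ultimately have "pG TYPE('a) \<le> enat (card ?H)"
    using \<open>finite ?H\<close> by (rule pG_le_card_subgroup)
  also have "card ?H \<le> card Y"
    using card_mono[OF _ H_sub] assms(2) by simp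
  finally show ?thesis by simp
qed

lemma not_periodic_if_card_less_pG:
  fixes g :: "'a::ab_group_add"
  assumes "g \<noteq> 0" "finite Y" "Y \<noteq> {}" "enat (card Y) < pG TYPE('a)"
  shows "\<not> g +o Y \<subseteq> Y"
proof
  assume periodic: "g +o Y \<subseteq> Y"
  obtain y where "y \<in> Y" using assms(3) by blast
  have "y + nsmul j g \<in> Y" for j
  proof (induction j)
    case (Suc j)
    then have "g + (y + nsmul j g) \<in> Y"
      using periodic by (auto simp: elt_set_plus_def)
    then show ?case by (simp add: algebra_simps)
  qed (simp add: \<open>y \<in> Y\<close>)
  then have "pG TYPE('a) \<le> enat (card Y)"
    by (rule pG_le_card_if_orbit_subset[OF assms(1,2)])
  with assms(4) show False by simp
qed

lemma dyson_transform:
  fixes A B :: "'a::ab_group_add set"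
  assumes "finite A" "finite B"
  shows "(A \<union> (e +o B)) + {x \<in> B. e + x \<in> A} \<subseteq> A + B"
    and "card (A \<union> (e +o B)) + card {x \<in> B. e + x \<in> A} = card A + card B"
proof -
  show "(A \<union> (e +o B)) + {x \<in> B. e + x \<in> A} \<subseteq> A + B"
  proof
    fix z assume "z \<in> (A \<union> (e +o B)) + {x \<in> B. e + x \<in> A}"
    then obtain u y where z: "z = u + y" "u \<in> A \<union> (e +o B)" "y \<in> {x \<in> B. e + x \<in> A}"
      by (rule set_plus_elim)
    show "z \<in> A + B"
    proof (cases "u \<in> A")
      case True
      with z show ?thesis by (simp add: set_plus_intro)
    next
      case False
      then obtain w where "w \<in> B" "u = e + w"
        using z(2) by (auto simp: elt_set_plus_def)
      then have "z = (e + y) + w" using z(1) by (simp add: algebra_simps)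
      with \<open>w \<in> B\<close> z(3) show ?thesis by (simp add: set_plus_intro)
    qed
  qed
  have "A \<inter> (e +o B) = e +o {x \<in> B. e + x \<in> A}"
    by (auto simp flip: set_minus_plus)
  moreover have "card A + card (e +o B) = card (A \<union> (e +o B)) + card (A \<inter> (e +o B))"
    using assms by (intro card_Un_Int) simp_all
  ultimately show "card (A \<union> (e +o B)) + card {x \<in> B. e + x \<in> A} = card A + card B"
    by simp
qed

theorem cauchy_davenport:
  fixes A B :: "'a::ab_group_add set"
  assumes "finite A" "finite B" "A \<noteq> {}" "B \<noteq> {}" "enat (card (A + B)) < pG TYPE('a)"
  shows "card A + card B \<le> card (A + B) + 1"
  using assms
proof (induction "card B" arbitrary: A B rule: less_induct)
  case less
  obtain b0 where b0: "b0 \<in> B" using less.prems(4) by blast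
  show ?case
  proof (cases "B = {b0}")
    case True
    then show ?thesis by (simp add: card_plus_sing)
  next
    case False
    then obtain b where b: "b \<in> B" "b \<noteq> b0" using b0 by blast
    have "card A \<le> card (A + B)"
      using less.prems(1,2) b0 by (rule card_le_card_set_plus)
    then have "\<not> (b - b0) +o A \<subseteq> A"
      using b(2) less.prems(1,3,5) by (intro not_periodic_if_card_less_pG) (auto intro: enat_le_less_trans)
    then obtain a where a: "a \<in> A" "b - b0 + a \<notin> A"
      unfolding elt_set_plus_def by blast
    define e where "e = a - b0"
    let ?A' = "A \<union> (e +o B)" and ?B' = "{x \<in> B. e + x \<in> A}"
    have "b0 \<in> ?B'" using a b0 by (simp add: e_def)
    moreover have "e + b = b - b0 + a" by (simp add: e_def)
    then have "b \<notin> ?B'" using a(2) by (metis (mono_tags, lifting) mem_Collect_eq)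
    then have "?B' \<subset> B" using b(1) by blast
    then have "card ?B' < card B"
      by (rule psubset_card_mono[OF less.prems(2)])
    moreover have "card (?A' + ?B') \<le> card (A + B)"
      using dyson_transform(1)[OF less.prems(1,2)] less.prems(1,2)
      by (intro card_mono) (simp_all add: finite_set_plus)
    moreover have "finite ?A'" "finite ?B'" "?A' \<noteq> {}"
      using less.prems(1-3) by auto
    moreover have "enat (card (?A' + ?B')) < pG TYPE('a)"
      using enat_le_less_trans[OF _ less.prems(5)] calculation(3) by blast
    ultimately have "card ?A' + card ?B' \<le> card (?A' + ?B') + 1"
      using less.hyps by blast
    then show ?thesis
      using dyson_transform(2)[OF less.prems(1,2), of e] \<open>card (?A' + ?B') \<le> card (A + B)\<close> by linarith
  qed
qed

definition progression :: "'a::monoid_add \<Rightarrow> 'a \<Rightarrow> nat \<Rightarrow> 'a set" where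
  "progression c d k = (\<lambda>j. c + nsmul j d) ` {..<k}"

definition is_progression :: "'a::monoid_add \<Rightarrow> 'a set \<Rightarrow> bool" where
  "is_progression d Y \<longleftrightarrow> (\<exists>c. Y = progression c d (card Y))"

lemma finite_progression [simp]: "finite (progression c d k)"
  by (simp add: progression_def)

lemma progression_eq_empty_iff [simp]: "progression c d k = {} \<longleftrightarrow> k = 0"
  by (auto simp: progression_def)

lemma card_progression_le: "card (progression c d k) \<le> k"
  unfolding progression_def using card_image_le[of "{..<k}"] by simp

lemma progression_two:
  fixes b b' :: "'a::ab_group_add"
  shows "{b, b'} = progression b (b' - b) 2"
  by (auto simp: progression_def numeral_2_eq_2 lessThan_Suc)

lemma set_plus_zero_insert:
  fixes A :: "'a::comm_monoid_add set"
  shows "A + {0, d} = A \<union> (d +o A)"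
  by (auto simp: set_plus_def elt_set_plus_def add.commute)

lemma progression_Suc:
  fixes d :: "'a::comm_monoid_add"
  assumes "0 < k"
  shows "progression c d (Suc k) = progression c d k + {0, d}"
proof -
  have "progression c d (Suc k) = progression c d k \<union> (d +o progression c d k)"
  proof (intro equalityI subsetI)
    fix x assume "x \<in> progression c d (Suc k)"
    then obtain j where j: "j < Suc k" "x = c + nsmul j d"
      by (auto simp: progression_def)
    show "x \<in> progression c d k \<union> (d +o progression c d k)"
    proof (cases j)
      case 0
      then have "x = c + nsmul 0 d" using j by simp
      with assms have "x \<in> progression c d k"
        unfolding progression_def by (intro image_eqI[of _ _ 0]) simp_all
      then show ?thesis ..
    next
      case (Suc i)
      then have "x = d + (c + nsmul i d)" "i < k"
        using j by (simp_all add: add_ac)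
      then show ?thesis by (auto simp: progression_def elt_set_plus_def)
    qed
  next
    fix x assume "x \<in> progression c d k \<union> (d +o progression c d k)"
    then consider j where "j < k" "x = c + nsmul j d" | j where "j < k" "x = d + (c + nsmul j d)"
      by (auto simp: progression_def elt_set_plus_def)
    then show "x \<in> progression c d (Suc k)"
    proof cases
      case 2
      then have "x = c + nsmul (Suc j) d" by (simp add: add_ac)
      with \<open>j < k\<close> show ?thesis
        unfolding progression_def by (intro image_eqI[of _ _ "Suc j"]) simp_all
    qed (auto simp: progression_def)
  qed
  then show ?thesis by (simp add: set_plus_zero_insert)
qed

lemma set_plus_progression_subset:
  fixes d :: "'a::comm_monoid_add"
  assumes "0 < n1" "0 < n2"
  shows "progression c1 d n1 + progression c2 d n2 \<subseteq> progression (c1 + c2) d (n1 + n2 - 1)"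
proof
  fix z assume "z \<in> progression c1 d n1 + progression c2 d n2"
  then obtain i j where "i < n1" "j < n2" "z = (c1 + nsmul i d) + (c2 + nsmul j d)"
    by (auto simp: progression_def elim: set_plus_elim)
  moreover have "(c1 + nsmul i d) + (c2 + nsmul j d) = (c1 + c2) + nsmul (i + j) d"
    by (simp add: nsmul_add add_ac)
  ultimately show "z \<in> progression (c1 + c2) d (n1 + n2 - 1)"
    unfolding progression_def by (intro image_eqI[of _ _ "i + j"]) auto
qed

lemma card_progression:
  fixes d :: "'a::ab_group_add"
  assumes "d \<noteq> 0" "enat (card (progression c d k)) < pG TYPE('a)"
  shows "card (progression c d k) = k"
proof -
  have "inj_on (\<lambda>j. c + nsmul j d) {..<k}"
  proof (rule ccontr)
    assume "\<not> ?thesis"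
    then obtain i j where ij: "i < j" "j < k" "nsmul i d = nsmul j d"
      unfolding inj_on_def by (metis add_left_cancel lessThan_iff linorder_neqE_nat)
    define r where "r = j - i"
    have "nsmul j d = nsmul i d + nsmul r d"
      using ij(1) nsmul_add[of i r d] by (simp add: r_def)
    then have "nsmul r d = 0" using ij(3) by simp
    moreover have "0 < r" "r < k" using ij by (simp_all add: r_def)
    ultimately have "c + nsmul t d \<in> progression c d k" for t
      unfolding progression_def
      by (intro image_eqI[of _ _ "t mod r"])
        (simp_all add: nsmul_mod order.strict_trans[OF mod_less_divisor])
    then have "pG TYPE('a) \<le> enat (card (progression c d k))"
      by (intro pG_le_card_if_orbit_subset[OF assms(1)]) simp_all
    with assms(2) show False by simp
  qed
  then show ?thesis by (simp add: progression_def card_image)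
qed

lemma is_progressionI:
  fixes d :: "'a::ab_group_add"
  assumes "d \<noteq> 0" "Y = progression c d k" "enat (card Y) < pG TYPE('a)"
  shows "is_progression d Y"
  using assms card_progression unfolding is_progression_def by metis

lemma obtain_progression_card_two:
  fixes W :: "'a::ab_group_add set"
  assumes "card W = 2" "enat 2 < pG TYPE('a)"
  obtains d where "d \<noteq> 0" "is_progression d W"
proof -
  obtain x y where "W = {x, y}" "x \<noteq> y" using assms(1) by (meson card_2_iff)
  then have "W = progression x (y - x) 2" "y - x \<noteq> 0" by (simp_all add: progression_two)
  with assms show ?thesis using that is_progressionI by metis
qed

(* Y + {0, d} has only one point outside Y, so walking from any y in steps of d one leaves Y at
   that same point; Y is the run of d-steps ending there. *)

lemma is_progression_if_card_set_plus_zero_insert: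
  fixes d :: "'a::ab_group_add"
  assumes "d \<noteq> 0" "finite Y" "Y \<noteq> {}" "card (Y + {0, d}) \<le> card Y + 1"
    and "enat (card Y) < pG TYPE('a)"
  shows "is_progression d Y"
proof -
  have leaves: "\<exists>k. y + nsmul k d \<notin> Y" for y
    using pG_le_card_if_orbit_subset[OF assms(1,2)] assms(5) by (meson leD)
  define h where "h y = (LEAST k. y + nsmul k d \<notin> Y)" for y
  have h_out: "y + nsmul (h y) d \<notin> Y" for y
    unfolding h_def by (rule LeastI_ex[OF leaves])
  have h_in: "y + nsmul i d \<in> Y" if "i < h y" for y i
    using that not_less_Least unfolding h_def by blast
  have h_pos: "0 < h y" if "y \<in> Y" for y
    using that h_out[of y] by (intro gr0I) simp
  have exit: "y + nsmul (h y) d \<in> (d +o Y) - Y" if y: "y \<in> Y" for y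
  proof -
    obtain i where "h y = Suc i" using h_pos[OF y] gr0_implies_Suc by blast
    then have "y + nsmul (h y) d = d + (y + nsmul i d)" "y + nsmul i d \<in> Y"
      using h_in[of i y] by (simp_all add: add_ac)
    then show ?thesis using h_out[of y] by (auto simp: elt_set_plus_def)
  qed
  have "Y + {0, d} = Y \<union> ((d +o Y) - Y)"
    by (simp add: set_plus_zero_insert)
  moreover have "card (Y \<union> ((d +o Y) - Y)) = card Y + card ((d +o Y) - Y)"
    using assms(2) by (intro card_Un_disjoint) auto
  ultimately have "card (Y + {0, d}) = card Y + card ((d +o Y) - Y)" by simp
  then have "card ((d +o Y) - Y) \<le> 1" using assms(4) by simp
  then have same_exit: "y + nsmul (h y) d = y' + nsmul (h y') d" if "y \<in> Y" "y' \<in> Y" for y y'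
    using exit[OF that(1)] exit[OF that(2)] assms(2) card_le_Suc0_iff_eq[of "(d +o Y) - Y"]
    by auto
  have "Max (h ` Y) \<in> h ` Y" using assms(2,3) by simp
  then obtain y0 where y0: "y0 \<in> Y" "h y0 = Max (h ` Y)" by (metis imageE)
  have "Y = progression y0 d (h y0)"
  proof (intro equalityI subsetI)
    fix y assume y: "y \<in> Y"
    then have "h y \<le> h y0" using y0(2) assms(2) by simp
    then have "(y0 + nsmul (h y0 - h y) d) + nsmul (h y) d = y0 + nsmul (h y0) d"
      by (simp add: add.assoc flip: nsmul_add)
    also have "\<dots> = y + nsmul (h y) d" using same_exit[OF y0(1) y] .
    finally have "y = y0 + nsmul (h y0 - h y) d" by simp
    moreover have "h y0 - h y < h y0"
      using h_pos[OF y] h_pos[OF y0(1)] by simp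
    ultimately show "y \<in> progression y0 d (h y0)" by (auto simp: progression_def)
  qed (use h_in in \<open>auto simp: progression_def\<close>)
  then show ?thesis using assms(1,5) by (intro is_progressionI)
qed

lemma is_progression_if_card_set_plus_progression:
  fixes d :: "'a::ab_group_add"
  assumes "d \<noteq> 0" "finite A" "A \<noteq> {}" "2 \<le> n"
    and "card (A + progression c d n) + 1 \<le> card A + n"
    and "enat (card (A + progression c d n)) < pG TYPE('a)"
  shows "is_progression d A"
proof -
  let ?P = "progression c d (n - 1)"
  have "progression c d n = ?P + {0, d}"
    using progression_Suc[of "n - 1" c d] assms(4) by (simp add: Suc_diff_le)
  then have split: "A + progression c d n = (A + {0, d}) + ?P"
    by (simp add: add_ac)
  have ne: "A + {0, d} \<noteq> {}" "?P \<noteq> {}"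
    using assms(3,4) by (auto simp: set_plus_def)
  have "card (A + {0, d}) + card ?P \<le> card ((A + {0, d}) + ?P) + 1"
    using assms(2,6) ne unfolding split by (intro cauchy_davenport) (simp_all add: finite_set_plus)
  moreover have "card ?P \<le> card ((A + {0, d}) + ?P)"
    using ne(1) assms(2) card_le_card_set_plus[of ?P "A + {0, d}"]
    by (auto simp: add.commute finite_set_plus)
  then have "card ?P = n - 1"
    using assms(1) enat_le_less_trans[OF _ assms(6)[unfolded split]] by (intro card_progression) simp_all
  ultimately have "card (A + {0, d}) \<le> card A + 1"
    using assms(4,5) unfolding split by linarith
  moreover have "card A \<le> card (A + progression c d n)"
    using assms(2,4) card_le_card_set_plus[of A "progression c d n"] by fastforce
  ultimately show ?thesis
    using assms(1-3) enat_le_less_trans[OF _ assms(6)]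
    by (intro is_progression_if_card_set_plus_zero_insert) simp_all
qed

lemma is_progression_if_set_plus_subset_progression:
  fixes d :: "'a::ab_group_add"
  assumes "d \<noteq> 0" "finite A" "finite B" "A \<noteq> {}" "B \<noteq> {}"
    and "A + B \<subseteq> progression c d n" "n + 1 \<le> card A + card B"
    and "enat (n + 1) < pG TYPE('a)"
  shows "is_progression d B"
proof -
  have "0 < n"
    using assms(4-6) by (metis gr0I progression_eq_empty_iff set_plus_eq_empty_iff subset_empty)
  have "A + (B + {0, d}) = (A + B) + {0, d}"
    by (rule add.assoc[symmetric])
  also have "\<dots> \<subseteq> progression c d n + {0, d}"
    using assms(6) by (rule set_plus_mono2) simp
  also have "\<dots> = progression c d (Suc n)"
    using \<open>0 < n\<close> by (rule progression_Suc[symmetric])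
  finally have "card (A + (B + {0, d})) \<le> card (progression c d (Suc n))"
    by (rule card_mono[OF finite_progression])
  then have "card (A + (B + {0, d})) \<le> Suc n"
    using card_progression_le[of c d "Suc n"] by linarith
  moreover have "card A + card (B + {0, d}) \<le> card (A + (B + {0, d})) + 1"
    using assms(2-5) \<open>card (A + (B + {0, d})) \<le> Suc n\<close>
    by (intro cauchy_davenport) (auto simp: finite_set_plus intro: enat_le_less_trans[OF _ assms(8)])
  ultimately have "card (B + {0, d}) \<le> card B + 1"
    using assms(7) by linarith
  moreover obtain a where "a \<in> A" using assms(4) by blast
  then have "card B \<le> card (A + B)"
    using card_le_card_set_plus[OF assms(3,2)] by (simp add: add.commute)
  moreover have "card (A + B) \<le> n"
    using card_mono[OF finite_progression assms(6)] card_progression_le[of c d n] by linarith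
  ultimately show ?thesis
    using assms(1,3,5) enat_le_less_trans[OF _ assms(8)]
    by (intro is_progression_if_card_set_plus_zero_insert) simp_all
qed

lemma is_progression_if_set_plus_eq:
  fixes d :: "'a::ab_group_add"
  assumes "d \<noteq> 0" "finite A" "finite B" "A \<noteq> {}" "B \<noteq> {}"
    and "is_progression d A'" "is_progression d B'" "0 < card A'" "0 < card B'"
    and "A' + B' = A + B" "card A' + card B' \<le> card A + card B"
    and "enat (card (A + B) + 1) < pG TYPE('a)"
  shows "is_progression d A \<and> is_progression d B"
proof -
  have "enat (card (A' + B')) < pG TYPE('a)"
    using enat_le_less_trans[OF le_add1 assms(12)] assms(10) by simp
  then have "card A' + card B' \<le> card (A' + B') + 1"
    using assms(8,9) by (intro cauchy_davenport) (simp_all add: card_gt_0_iff)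
  then have lt: "enat (card A' + card B') < pG TYPE('a)"
    using assms(10,12) enat_le_less_trans by simp
  obtain c1 c2 where "A' = progression c1 d (card A')" "B' = progression c2 d (card B')"
    using assms(6,7) unfolding is_progression_def by blast
  then have "A' + B' \<subseteq> progression (c1 + c2) d (card A' + card B' - 1)"
    using assms(8,9) by (metis set_plus_progression_subset)
  then have sub: "A + B \<subseteq> progression (c1 + c2) d (card A' + card B' - 1)"
    using assms(10) by simp
  have n: "card A' + card B' - 1 + 1 = card A' + card B'" using assms(8) by simp
  show ?thesis
  proof
    show "is_progression d B"
      by (rule is_progression_if_set_plus_subset_progression[OF assms(1-5) sub])
        (simp_all only: n assms(11) lt)
    show "is_progression d A"
      by (rule is_progression_if_set_plus_subset_progression[OF assms(1,3,2,5,4),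
            where c = "c1 + c2" and n = "card A' + card B' - 1"])
        (use sub n assms(11) lt in \<open>simp_all add: add.commute\<close>)
  qed
qed

lemma card_common_shifts:
  fixes A :: "'a::ab_group_add set"
  shows "card {e. e + b \<in> A \<and> e + b' \<in> A} = card ((b +o A) \<inter> (b' +o A))"
proof -
  have "{e. e + b \<in> A \<and> e + b' \<in> A} = (- (b + b')) +o ((b +o A) \<inter> (b' +o A))"
  proof (intro set_eqI)
    fix e
    have "e \<in> (- (b + b')) +o ((b +o A) \<inter> (b' +o A)) \<longleftrightarrow> e + b' \<in> A \<and> e + b \<in> A"
      by (simp flip: set_minus_plus add: algebra_simps)
    then show "e \<in> {e. e + b \<in> A \<and> e + b' \<in> A} \<longleftrightarrow> e \<in> (- (b + b')) +o ((b +o A) \<inter> (b' +o A))"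
      by auto
  qed
  then show ?thesis by simp
qed

lemma two_card_le_card_set_plus_common_shifts:
  fixes A B :: "'a::ab_group_add set"
  assumes "finite A" "finite B" "b \<in> B" "b' \<in> B"
  shows "card A + card A \<le> card (A + B) + card {e. e + b \<in> A \<and> e + b' \<in> A}"
proof -
  have "(b +o A) \<union> (b' +o A) \<subseteq> A + B"
    using assms(3,4) by (metis Un_least add.commute set_plus_mono3)
  then have "card ((b +o A) \<union> (b' +o A)) \<le> card (A + B)"
    using assms(1,2) by (intro card_mono) (simp_all add: finite_set_plus)
  moreover have "card (b +o A) + card (b' +o A) = card ((b +o A) \<union> (b' +o A)) + card ((b +o A) \<inter> (b' +o A))"
    using assms(1) by (intro card_Un_Int) simp_all
  ultimately show ?thesis by (simp add: card_common_shifts)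
qed

lemma vosper_transform:
  fixes A B :: "'a::ab_group_add set"
  assumes "finite A" "finite B" "card B \<le> card A"
    and "card (A + B) + 1 \<le> card A + card B" "enat (card (A + B)) < pG TYPE('a)"
    and "b \<in> B" "b' \<in> B" "b \<noteq> b'" "e + b \<in> A" "e + b' \<in> A" "\<not> e +o B \<subseteq> A"
  obtains A' B' where "finite A'" "finite B'" "2 \<le> card A'" "2 \<le> card B'"
    "card A' + card B' = card A + card B" "card A' * card B' < card A * card B"
    "A' + B' = A + B"
proof -
  let ?A' = "A \<union> (e +o B)" and ?B' = "{x \<in> B. e + x \<in> A}"
  have fin: "finite ?A'" "finite ?B'" using assms(1,2) by simp_all
  have sums: "card ?A' + card ?B' = card A + card B"
    using assms(1,2) by (rule dyson_transform(2))
  have sub: "?A' + ?B' \<subseteq> A + B"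
    using assms(1,2) by (rule dyson_transform(1))
  have "{b, b'} \<subseteq> ?B'" using assms(6,7,9,10) by simp
  then have "card {b, b'} \<le> card ?B'" by (rule card_mono[OF fin(2)])
  then have B'2: "2 \<le> card ?B'" using assms(8) by simp
  have "?B' \<subset> B" using assms(11) by (auto simp: elt_set_plus_def)
  then have B'B: "card ?B' < card B" by (rule psubset_card_mono[OF assms(2)])
  have "card (?A' + ?B') \<le> card (A + B)"
    using assms(1,2) sub by (intro card_mono) (simp_all add: finite_set_plus)
  moreover have "card ?A' + card ?B' \<le> card (?A' + ?B') + 1"
    using fin \<open>{b, b'} \<subseteq> ?B'\<close> assms(5,9) calculation
    by (intro cauchy_davenport) (auto intro: enat_le_less_trans)
  ultimately have "card (?A' + ?B') = card (A + B)"
    using sums assms(4) by linarith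
  then have "?A' + ?B' = A + B"
    using card_subset_eq[OF _ sub] assms(1,2) by (simp add: finite_set_plus)
  moreover have "card ?A' * card ?B' < card A * card B"
  proof -
    define u where "u = card B - card ?B'"
    define v where "v = card A - card B"
    have u: "card B = card ?B' + u" "0 < u" using B'B by (simp_all add: u_def)
    have v: "card A = card B + v" using assms(3) by (simp add: v_def)
    have "card ?A' = card ?B' + 2 * u + v" using sums u(1) v by linarith
    then have "card A * card B = card ?A' * card ?B' + u * (u + v)"
      unfolding v u(1) by (simp add: algebra_simps)
    then show ?thesis using u(2) by simp
  qed
  moreover have "2 \<le> card ?A'" using B'2 B'B assms(3) sums by linarith
  ultimately show ?thesis using that fin B'2 sums by blast
qed

lemma vosper_rigid_reduction:
  fixes A B :: "'a::ab_group_add set"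
  assumes "finite A" "finite B" "2 \<le> card B" "card B < card A"
    and "card (A + B) + 1 \<le> card A + card B" "enat (card (A + B) + 1) < pG TYPE('a)"
    and closed: "\<And>e b b'. b \<in> B \<Longrightarrow> b' \<in> B \<Longrightarrow> b \<noteq> b' \<Longrightarrow> e + b \<in> A \<Longrightarrow> e + b' \<in> A
      \<Longrightarrow> e +o B \<subseteq> A"
  obtains D where "finite D" "2 \<le> card D" "card D < card A"
    "card (D + B) + 1 \<le> card D + card B" "enat (card (D + B) + 1) < pG TYPE('a)"
proof -
  obtain b b' where b: "b \<in> B" "b' \<in> B" "b \<noteq> b'"
    using assms(3) by (rule obtain_two_distinct)
  define D where "D = {e. e + b \<in> A \<and> e + b' \<in> A}"
  have "card A + card A \<le> card (A + B) + card D"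
    unfolding D_def using assms(1,2) b(1,2) by (rule two_card_le_card_set_plus_common_shifts)
  then have D_large: "card A + 1 \<le> card D + card B" using assms(5) by linarith
  then have "2 \<le> card D" using assms(4) by linarith
  then have "finite D" "D \<noteq> {}" using card.infinite by fastforce+
  have "D + B \<subseteq> A"
  proof
    fix z assume "z \<in> D + B"
    then obtain e c where "z = e + c" "e \<in> D" "c \<in> B" by (rule set_plus_elim)
    then show "z \<in> A"
      using closed[OF b, of e] by (auto simp: D_def elt_set_plus_def)
  qed
  then have DB_A: "card (D + B) \<le> card A"
    using assms(1) by (rule card_mono[rotated])
  have "card A \<le> card (A + B)"
    using assms(1,2) b(1) by (rule card_le_card_set_plus)
  then have DB_lt: "enat (card (D + B) + 1) < pG TYPE('a)"
    using DB_A enat_le_less_trans[OF _ assms(6)] by simp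
  have "card D + card B \<le> card (D + B) + 1"
    using \<open>finite D\<close> assms(2) \<open>D \<noteq> {}\<close> b(1) enat_le_less_trans[OF le_add1 DB_lt]
    by (intro cauchy_davenport) auto
  then have "card D < card A" using DB_A assms(3) by linarith
  moreover have "card (D + B) + 1 \<le> card D + card B" using DB_A D_large by linarith
  ultimately show ?thesis using that \<open>finite D\<close> \<open>2 \<le> card D\<close> DB_lt by blast
qed

lemma card_common_shifts_le_one:
  fixes A B :: "'a::ab_group_add set"
  assumes "A = e0 +o B" "finite A" "enat (card A) < pG TYPE('a)"
    and closed: "\<And>e b b'. b \<in> B \<Longrightarrow> b' \<in> B \<Longrightarrow> b \<noteq> b' \<Longrightarrow> e + b \<in> A \<Longrightarrow> e + b' \<in> A
      \<Longrightarrow> e +o B \<subseteq> A"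
    and "\<beta> \<in> B" "\<beta>' \<in> B" "\<beta> \<noteq> \<beta>'"
  shows "card {e. e + \<beta> \<in> A \<and> e + \<beta>' \<in> A} \<le> 1"
proof (rule ccontr)
  assume "\<not> ?thesis"
  then have "2 \<le> card {e. e + \<beta> \<in> A \<and> e + \<beta>' \<in> A}" by simp
  then obtain e e' where e: "e + \<beta> \<in> A" "e + \<beta>' \<in> A" "e' + \<beta> \<in> A" "e' + \<beta>' \<in> A" "e \<noteq> e'"
    by (elim obtain_two_distinct) auto
  obtain c c' where c: "c \<in> B" "e + \<beta> = e0 + c" "c' \<in> B" "e' + \<beta> = e0 + c'"
    using e(1,3) unfolding assms(1) elt_set_plus_def by blast
  define g where "g = e0 + (\<beta>' - \<beta>)"
  have "g + c = e + \<beta>'" "g + c' = e' + \<beta>'"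
    using c(2,4) by (simp_all add: g_def algebra_simps)
  then have "g +o B \<subseteq> A"
    using closed[OF c(1,3)] c e by (metis add_right_cancel)
  then have "(\<beta>' - \<beta>) +o A \<subseteq> A"
    unfolding assms(1) g_def set_plus_rearrange2 by (simp add: add.commute)
  moreover have "\<not> (\<beta>' - \<beta>) +o A \<subseteq> A"
    using assms(2,3,7) e(1) by (intro not_periodic_if_card_less_pG) auto
  ultimately show False by blast
qed

lemma vosper_rigid_equal_card:
  fixes A B :: "'a::ab_group_add set"
  assumes "finite A" "finite B" "3 \<le> card B" "card A = card B"
    and "card (A + B) + 1 \<le> card A + card B" "enat (card (A + B)) < pG TYPE('a)"
    and closed: "\<And>e b b'. b \<in> B \<Longrightarrow> b' \<in> B \<Longrightarrow> b \<noteq> b' \<Longrightarrow> e + b \<in> A \<Longrightarrow> e + b' \<in> A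
      \<Longrightarrow> e +o B \<subseteq> A"
  shows False
proof -
  obtain T where "T \<subseteq> B" "card T = 3"
    using obtain_subset_with_card_n[OF assms(3)] by blast
  then obtain b1 b2 b3 where b: "b1 \<in> B" "b2 \<in> B" "b3 \<in> B" "b1 \<noteq> b2" "b2 \<noteq> b3" "b1 \<noteq> b3"
    by (auto simp: card_3_iff)
  have "card A \<le> card (A + B)" using assms(1,2) b(1) by (rule card_le_card_set_plus)
  then have lt: "enat (card A) < pG TYPE('a)" using assms(6) by (rule enat_le_less_trans)
  have "card A + card A \<le> card (A + B) + card {e. e + b1 \<in> A \<and> e + b2 \<in> A}"
    using assms(1,2) b(1,2) by (rule two_card_le_card_set_plus_common_shifts)
  then have "0 < card {e. e + b1 \<in> A \<and> e + b2 \<in> A}" using assms(4,5) by linarith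
  then obtain e0 where "e0 + b1 \<in> A" "e0 + b2 \<in> A"
    unfolding card_gt_0_iff by blast
  then have "e0 +o B \<subseteq> A" using closed b(1,2,4) by blast
  then have "A = e0 +o B"
    using assms(1,4) by (metis card_elt_set_plus card_subset_eq)
  note few_common_shifts = card_common_shifts_le_one[OF this assms(1) lt closed]
  have "b1 +o A \<union> (b2 +o A) \<union> (b3 +o A) \<subseteq> A + B"
    using b(1-3) by (metis Un_least add.commute set_plus_mono3)
  then have "card (b1 +o A \<union> (b2 +o A) \<union> (b3 +o A)) \<le> card (A + B)"
    using assms(1,2) by (intro card_mono) (simp_all add: finite_set_plus)
  moreover have "card (b1 +o A) + card (b2 +o A) + card (b3 +o A)
      \<le> card (b1 +o A \<union> (b2 +o A) \<union> (b3 +o A)) + card ((b1 +o A) \<inter> (b2 +o A))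
        + card ((b1 +o A) \<inter> (b3 +o A)) + card ((b2 +o A) \<inter> (b3 +o A))"
    using assms(1) by (intro card_sum_le_card_Un3) simp_all
  moreover have "card ((b1 +o A) \<inter> (b2 +o A)) \<le> 1" "card ((b1 +o A) \<inter> (b3 +o A)) \<le> 1"
      "card ((b2 +o A) \<inter> (b3 +o A)) \<le> 1"
    using few_common_shifts b by (simp_all flip: card_common_shifts)
  ultimately show False using assms(3-5) by simp
qed

lemma is_progression_if_card_set_plus_le:
  fixes d :: "'a::ab_group_add"
  assumes "d \<noteq> 0" "is_progression d B" "2 \<le> card B" "finite A" "A \<noteq> {}"
    and "card (A + B) + 1 \<le> card A + card B" "enat (card (A + B)) < pG TYPE('a)"
  shows "is_progression d A"
proof -
  obtain c where "B = progression c d (card B)"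
    using assms(2) unfolding is_progression_def by blast
  with assms show ?thesis
    by (metis is_progression_if_card_set_plus_progression)
qed

lemma vosper_card_two:
  fixes A B :: "'a::ab_group_add set"
  assumes "finite A" "A \<noteq> {}" "card B = 2"
    and "card (A + B) + 1 \<le> card A + card B" "enat (card (A + B)) < pG TYPE('a)"
  shows "\<exists>d. d \<noteq> 0 \<and> is_progression d A \<and> is_progression d B"
proof -
  obtain a where "a \<in> A" using assms(2) by blast
  then have "card B \<le> card (A + B)"
    using assms(1,3) by (intro card_le_card_set_plus_right) (simp_all add: card_ge_0_finite)
  then have "enat (card B) < pG TYPE('a)" using assms(5) by (rule enat_le_less_trans)
  then obtain d where "d \<noteq> 0" "is_progression d B"
    using obtain_progression_card_two[OF assms(3)] assms(3) by auto
  moreover have "2 \<le> card B" using assms(3) by simp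
  ultimately have "is_progression d A"
    using assms(1,2,4,5) by (rule is_progression_if_card_set_plus_le)
  with \<open>d \<noteq> 0\<close> \<open>is_progression d B\<close> show ?thesis by blast
qed

lemma vosper_step:
  fixes A B :: "'a::ab_group_add set"
  assumes IH: "\<And>A' B' :: 'a set. card A' * card B' < card A * card B \<Longrightarrow> finite A' \<Longrightarrow> finite B'
      \<Longrightarrow> 2 \<le> card A' \<Longrightarrow> 2 \<le> card B' \<Longrightarrow> card (A' + B') + 1 \<le> card A' + card B'
      \<Longrightarrow> enat (card (A' + B') + 1) < pG TYPE('a)
      \<Longrightarrow> \<exists>d. d \<noteq> 0 \<and> is_progression d A' \<and> is_progression d B'"
    and "finite A" "finite B" "2 \<le> card B" "card B \<le> card A"
    and "card (A + B) + 1 \<le> card A + card B" "enat (card (A + B) + 1) < pG TYPE('a)"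
  shows "\<exists>d. d \<noteq> 0 \<and> is_progression d A \<and> is_progression d B"
proof -
  have ne: "A \<noteq> {}" "B \<noteq> {}" using assms(4,5) by auto
  have lt: "enat (card (A + B)) < pG TYPE('a)"
    using enat_le_less_trans[OF le_add1 assms(7)] .
  consider "card B = 2"
    | e b b' where "b \<in> B" "b' \<in> B" "b \<noteq> b'" "e + b \<in> A" "e + b' \<in> A" "\<not> e +o B \<subseteq> A"
    | "3 \<le> card B" "\<And>e b b'. b \<in> B \<Longrightarrow> b' \<in> B \<Longrightarrow> b \<noteq> b' \<Longrightarrow> e + b \<in> A \<Longrightarrow> e + b' \<in> A
        \<Longrightarrow> e +o B \<subseteq> A"
    using assms(4) by fastforce
  then show ?thesis
  proof cases
    case 1
    then show ?thesis using assms(2,6) ne(1) lt by (intro vosper_card_two)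
  next
    case 2
    then obtain A' B' where A'B': "finite A'" "finite B'" "2 \<le> card A'" "2 \<le> card B'"
      "card A' + card B' = card A + card B" "card A' * card B' < card A * card B" "A' + B' = A + B"
      using vosper_transform[OF assms(2,3,5,6) lt] by metis
    then obtain d where "d \<noteq> 0" "is_progression d A'" "is_progression d B'"
      using IH[OF A'B'(6,1-4)] assms(6,7) by (auto simp: A'B'(5,7))
    moreover have "is_progression d A \<and> is_progression d B"
      using calculation assms(2,3) ne A'B' assms(7)
      by (intro is_progression_if_set_plus_eq[of d A B A' B']) simp_all
    ultimately show ?thesis by blast
  next
    case 3
    have "card A \<noteq> card B"
    proof
      assume "card A = card B"
      from assms(2,3) 3(1) this assms(6) lt 3(2) show False by (rule vosper_rigid_equal_card)
    qed
    then have "card B < card A" using assms(5) by simp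
    obtain D where D: "finite D" "2 \<le> card D" "card D < card A"
      "card (D + B) + 1 \<le> card D + card B" "enat (card (D + B) + 1) < pG TYPE('a)"
      using assms(2,3,4) \<open>card B < card A\<close> assms(6,7) 3(2) by (rule vosper_rigid_reduction)
    moreover have "card D * card B < card A * card B" using D(3) assms(4) by simp
    ultimately obtain d where "d \<noteq> 0" "is_progression d B"
      using IH[of D B] assms(3,4) by blast
    moreover have "is_progression d A"
      using calculation assms(4,2) ne(1) assms(6) lt by (rule is_progression_if_card_set_plus_le)
    ultimately show ?thesis by blast
  qed
qed

theorem vosper:
  fixes A B :: "'a::ab_group_add set"
  assumes "finite A" "finite B" "2 \<le> card A" "2 \<le> card B"
    and "card (A + B) + 1 \<le> card A + card B" "enat (card (A + B) + 1) < pG TYPE('a)"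
  shows "\<exists>d. d \<noteq> 0 \<and> is_progression d A \<and> is_progression d B"
  using assms
proof (induction "card A * card B" arbitrary: A B rule: less_induct)
  case less
  show ?case
  proof (cases "card B \<le> card A")
    case True
    show ?thesis
      by (rule vosper_step[OF less.hyps less.prems(1,2,4) True less.prems(5,6)])
  next
    case False
    have BA: "B + A = A + B" "card B + card A = card A + card B"
      by (simp_all only: add.commute)
    have "\<exists>d. d \<noteq> 0 \<and> is_progression d B \<and> is_progression d A"
    proof (rule vosper_step)
      fix A' B' :: "'a set"
      assume "card A' * card B' < card B * card A"
      then have "card A' * card B' < card A * card B" by (simp only: mult.commute)
      then show "finite A' \<Longrightarrow> finite B' \<Longrightarrow> 2 \<le> card A' \<Longrightarrow> 2 \<le> card B'
        \<Longrightarrow> card (A' + B') + 1 \<le> card A' + card B' \<Longrightarrow> enat (card (A' + B') + 1) < pG TYPE('a)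
        \<Longrightarrow> \<exists>d. d \<noteq> 0 \<and> is_progression d A' \<and> is_progression d B'"
        by (rule less.hyps)
    qed (use less.prems False in \<open>simp_all only: BA not_le less_imp_le\<close>)
    then show ?thesis by blast
  qed
qed

(* rho and Sigma^j of the subsequence of a indexed by J; the paper's sequence is J = {1..m}. *)

definition mult_on :: "(nat \<Rightarrow> 'a) \<Rightarrow> nat set \<Rightarrow> 'a \<Rightarrow> nat" where
  "mult_on a J x = card {i \<in> J. a i = x}"

definition Sigma_on :: "nat \<Rightarrow> (nat \<Rightarrow> 'a::comm_monoid_add) \<Rightarrow> nat set \<Rightarrow> 'a set" where
  "Sigma_on j a J = {sum a K | K. K \<subseteq> J \<and> card K = j}"

lemma finite_Sigma_on: "finite J \<Longrightarrow> finite (Sigma_on j a J)"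
proof -
  assume "finite J"
  moreover have "Sigma_on j a J \<subseteq> sum a ` Pow J" unfolding Sigma_on_def by auto
  ultimately show ?thesis by (meson finite_Pow_iff finite_imageI finite_subset)
qed

lemma Sigma_on_nonempty:
  assumes "j \<le> card J"
  shows "Sigma_on j a J \<noteq> {}"
proof -
  obtain K where "K \<subseteq> J" "card K = j"
    using obtain_subset_with_card_n[OF assms] by blast
  then show ?thesis unfolding Sigma_on_def by blast
qed

lemma Sigma_on_one: "Sigma_on 1 a J = a ` J"
proof (intro equalityI subsetI)
  fix z assume "z \<in> a ` J"
  then obtain i where "i \<in> J" "z = sum a {i}" by auto
  then show "z \<in> Sigma_on 1 a J" unfolding Sigma_on_def by force
qed (auto simp: Sigma_on_def card_1_singleton_iff)

lemma image_plus_Sigma_on_subset: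
  assumes "finite J" "F \<subseteq> J"
  shows "a ` F + Sigma_on j a (J - F) \<subseteq> Sigma_on (Suc j) a J"
proof
  fix z assume "z \<in> a ` F + Sigma_on j a (J - F)"
  then obtain i K where iK: "i \<in> F" "K \<subseteq> J - F" "card K = j" "z = a i + sum a K"
    unfolding Sigma_on_def by (auto elim!: set_plus_elim)
  then have "finite K" "i \<notin> K" using assms(1) finite_subset by auto
  then have "insert i K \<subseteq> J \<and> card (insert i K) = Suc j \<and> z = sum a (insert i K)"
    using iK assms(2) by auto
  then show "z \<in> Sigma_on (Suc j) a J" unfolding Sigma_on_def by blast
qed

lemma sum_mult_on:
  assumes "finite V" "finite J"
  shows "(\<Sum>x\<in>V. mult_on a J x) = card {i \<in> J. a i \<in> V}"
proof -
  have "{i \<in> J. a i \<in> V} = (\<Union>x\<in>V. {i \<in> J. a i = x})" by auto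
  moreover have "card (\<Union>x\<in>V. {i \<in> J. a i = x}) = (\<Sum>x\<in>V. card {i \<in> J. a i = x})"
    using assms by (intro card_UN_disjoint) auto
  ultimately show ?thesis unfolding mult_on_def by simp
qed

lemma sum_mult_on_image:
  assumes "finite J"
  shows "(\<Sum>x\<in>a ` J. mult_on a J x) = card J"
proof -
  have "{i \<in> J. a i \<in> a ` J} = J" by blast
  then show ?thesis using assms by (simp add: sum_mult_on)
qed

lemma card_mult_le_card:
  assumes "finite J" "finite V" "\<And>x. x \<in> V \<Longrightarrow> k \<le> mult_on a J x"
  shows "card V * k \<le> card J"
proof -
  have "card V * k \<le> (\<Sum>x\<in>V. mult_on a J x)"
    using sum_mono[of V "\<lambda>_. k"] assms(3) by simp
  also have "\<dots> \<le> card J"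
    unfolding sum_mult_on[OF assms(2,1)] using assms(1) by (intro card_mono) auto
  finally show ?thesis .
qed

lemma mult_on_pos_iff: "finite J \<Longrightarrow> 0 < mult_on a J x \<longleftrightarrow> x \<in> a ` J"
  unfolding mult_on_def by (auto simp: card_gt_0_iff)

lemma inj_on_if_mult_on_le_one:
  assumes "finite J" "\<And>x. mult_on a J x \<le> 1"
  shows "inj_on a J"
proof (rule inj_onI)
  fix i i' assume "i \<in> J" "i' \<in> J" "a i = a i'"
  then have "{i, i'} \<subseteq> {k \<in> J. a k = a i}" by auto
  then have "card {i, i'} \<le> mult_on a J (a i)"
    unfolding mult_on_def using assms(1) by (intro card_mono) auto
  then show "i = i'" using assms(2)[of "a i"] by (cases "i = i'") auto
qed

lemma obtain_transversal:
  assumes "finite J" "V \<subseteq> a ` J"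
  obtains F where "F \<subseteq> J" "bij_betw a F V"
    "\<And>x. mult_on a (J - F) x = mult_on a J x - of_bool (x \<in> V)"
proof
  let ?F = "inv_into J a ` V"
  show F: "?F \<subseteq> J" using assms(2) by (auto intro: inv_into_into)
  have inv: "a (inv_into J a x) = x" if "x \<in> V" for x
    using that assms(2) by (auto intro: f_inv_into_f)
  then have "a ` ?F = V" by (simp add: image_image)
  moreover have "inj_on a ?F" using inv by (auto simp: inj_on_def)
  ultimately show "bij_betw a ?F V" by (simp add: bij_betw_def)
  fix x
  show "mult_on a (J - ?F) x = mult_on a J x - of_bool (x \<in> V)"
  proof (cases "x \<in> V")
    case True
    then have "{i \<in> J - ?F. a i = x} = {i \<in> J. a i = x} - {inv_into J a x}"
      using assms(2) by (auto simp: f_inv_into_f subset_eq)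
    moreover have "inv_into J a x \<in> {i \<in> J. a i = x}"
      using True assms(2) by (auto intro: inv_into_into f_inv_into_f)
    ultimately show ?thesis
      unfolding mult_on_def using True assms(1) by simp
  next
    case False
    then have "{i \<in> J - ?F. a i = x} = {i \<in> J. a i = x}"
      using assms(2) by (auto simp: f_inv_into_f subset_eq)
    then show ?thesis unfolding mult_on_def using False by simp
  qed
qed

lemma obtain_subsequence_dropping_values:
  assumes "finite J" "V \<subseteq> a ` J"
  obtains J' where "J' \<subseteq> J" "card J' + card V = card J"
    "\<And>x. mult_on a J' x = mult_on a J x - of_bool (x \<in> V)"
    "\<And>j. V + Sigma_on j a J' \<subseteq> Sigma_on (Suc j) a J"
proof -
  obtain F where F: "F \<subseteq> J" "bij_betw a F V"
    "\<And>x. mult_on a (J - F) x = mult_on a J x - of_bool (x \<in> V)"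
    using obtain_transversal[OF assms] by blast
  have "card F = card V" using F(2) by (rule bij_betw_same_card)
  then have "card (J - F) + card V = card J"
    using F(1) assms(1) card_mono[OF assms(1) F(1)] by (simp add: card_Diff_subset finite_subset)
  moreover have "a ` F = V" using F(2) by (simp add: bij_betw_def)
  then have "V + Sigma_on j a (J - F) \<subseteq> Sigma_on (Suc j) a J" for j
    using image_plus_Sigma_on_subset[OF assms(1) F(1)] by blast
  ultimately show ?thesis using that[of "J - F"] F(3) by blast
qed

lemma obtain_values_of_max_mult:
  assumes "finite J" "Suc k \<le> card J" "\<And>x. mult_on a J x \<le> Suc k"
  obtains V where "V \<subseteq> a ` J" "V \<noteq> {}" "card V + k \<le> card J"
    "\<And>x. mult_on a J x = Suc k \<Longrightarrow> x \<in> V"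
proof (cases "\<exists>x. mult_on a J x = Suc k")
  case False
  obtain i where "i \<in> J" using assms(2) by fastforce
  then show ?thesis using that[of "{a i}"] False assms(2) by auto
next
  case True
  let ?V = "{x \<in> a ` J. mult_on a J x = Suc k}"
  have full: "x \<in> ?V" if "mult_on a J x = Suc k" for x
    using that mult_on_pos_iff[OF assms(1), of a x] by simp
  then have "?V \<noteq> {}" using True by blast
  then have "1 \<le> card ?V" using assms(1) by (simp add: Suc_leI card_gt_0_iff)
  then have "card ?V + k \<le> card ?V * Suc k"
    using mult_le_mono1[of 1 "card ?V" k] by simp
  also have "\<dots> \<le> card J"
    using assms(1) by (intro card_mult_le_card[where a = a]) auto
  finally have "card ?V + k \<le> card J" .
  then show ?thesis using that[of ?V] \<open>?V \<noteq> {}\<close> full by blast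
qed

theorem card_Sigma_on_lower_bound:
  fixes a :: "nat \<Rightarrow> 'a::ab_group_add"
  assumes "finite J" "1 \<le> j" "j \<le> card J" "\<And>x. mult_on a J x \<le> j"
    and "enat (card (Sigma_on j a J)) < pG TYPE('a)"
  shows "card J + 1 \<le> card (Sigma_on j a J) + j"
  using assms
proof (induction j arbitrary: J)
  case 0
  then show ?case by simp
next
  case (Suc j J)
  show ?case
  proof (cases "j = 0")
    case True
    then have "inj_on a J" using Suc.prems(1,4) by (intro inj_on_if_mult_on_le_one) simp_all
    then show ?thesis using True Sigma_on_one[of a J] by (simp add: card_image)
  next
    case False
    obtain V where V: "V \<subseteq> a ` J" "V \<noteq> {}" "card V + j \<le> card J"
      "\<And>x. mult_on a J x = Suc j \<Longrightarrow> x \<in> V"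
      using obtain_values_of_max_mult[OF Suc.prems(1,3,4)] by blast
    obtain J' where J': "J' \<subseteq> J" "card J' + card V = card J"
      "\<And>x. mult_on a J' x = mult_on a J x - of_bool (x \<in> V)"
      "V + Sigma_on j a J' \<subseteq> Sigma_on (Suc j) a J"
      using obtain_subsequence_dropping_values[OF Suc.prems(1) V(1)] by metis
    let ?S = "Sigma_on j a J'"
    have mult_J': "mult_on a J' x \<le> j" for x
      using J'(3)[of x] V(4)[of x] Suc.prems(4)[of x] by (cases "x \<in> V") (auto simp: le_Suc_eq)
    have le: "card (V + ?S) \<le> card (Sigma_on (Suc j) a J)"
      using J'(4) Suc.prems(1) by (intro card_mono finite_Sigma_on)
    then have lt: "enat (card (V + ?S)) < pG TYPE('a)"
      using Suc.prems(5) by (rule enat_le_less_trans)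
    have "finite J'" using J'(1) Suc.prems(1) by (rule finite_subset)
    then have fin: "finite V" "finite J'" "finite ?S"
      using V(1) Suc.prems(1) finite_surj by (auto intro: finite_Sigma_on)
    have "?S \<noteq> {}" using V(3) J'(2) by (intro Sigma_on_nonempty) simp
    have "card V + card ?S \<le> card (V + ?S) + 1"
      using fin(1,3) V(2) \<open>?S \<noteq> {}\<close> lt by (rule cauchy_davenport)
    moreover have "card J' + 1 \<le> card ?S + j"
    proof (rule Suc.IH)
      obtain v where "v \<in> V" using V(2) by blast
      then have "card ?S \<le> card (V + ?S)"
        using fin(1,3) by (rule card_le_card_set_plus_right[rotated 2])
      then show "enat (card ?S) < pG TYPE('a)" using lt by (rule enat_le_less_trans)
    qed (use False V(3) J'(2) mult_J' fin(2) in auto)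
    ultimately show ?thesis using le J'(2) by linarith
  qed
qed

lemma critical_pairs_of_critical_triple:
  fixes A W Z :: "'a::ab_group_add set"
  assumes "finite A" "finite W" "finite Z" "W \<noteq> {}" "Z \<noteq> {}" "2 \<le> card A"
    and "card (A + (W + Z)) + 2 \<le> card A + card W + card Z"
    and "enat (card (A + (W + Z))) < pG TYPE('a)"
  shows "card (A + W) + 1 \<le> card A + card W"
    and "card (W + Z) + 1 \<le> card W + card Z"
    and "enat (card (W + Z) + 1) < pG TYPE('a)"
proof -
  have "A \<noteq> {}" using assms(6) by auto
  then have "card A + card (W + Z) \<le> card (A + (W + Z)) + 1"
    using assms by (intro cauchy_davenport) (simp_all add: finite_set_plus)
  moreover have "card (A + W) + card Z \<le> card (A + W + Z) + 1"
    using assms \<open>A \<noteq> {}\<close> by (intro cauchy_davenport) (simp_all add: finite_set_plus add.assoc)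
  ultimately show "card (A + W) + 1 \<le> card A + card W" "card (W + Z) + 1 \<le> card W + card Z"
    using assms(6,7) by (simp_all add: add.assoc)
  have "card (W + Z) + 1 \<le> card (A + (W + Z))"
    using \<open>card A + card (W + Z) \<le> _\<close> assms(6) by linarith
  then show "enat (card (W + Z) + 1) < pG TYPE('a)"
    using assms(8) by (rule enat_le_less_trans)
qed

lemma obtain_critical_splitting:
  fixes a :: "nat \<Rightarrow> 'a::comm_monoid_add"
  assumes "finite E" "2 \<le> k" "k < card E" "\<And>x. mult_on a E x \<le> k" "2 \<le> card (a ` E)"
  obtains W E' where "W \<subseteq> a ` E" "2 \<le> card W" "finite E'" "card E' + card W = card E"
    "\<And>x. mult_on a E' x \<le> k - 1" "W + Sigma_on (k - 1) a E' \<subseteq> Sigma_on k a E"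
    "3 \<le> card W \<Longrightarrow> k \<le> card E'"
proof -
  let ?V = "{x \<in> a ` E. mult_on a E x = k}"
  have fin: "finite (a ` E)" using assms(1) by simp
  obtain W where W: "?V \<subseteq> W" "W \<subseteq> a ` E" "2 \<le> card W" "3 \<le> card W \<Longrightarrow> W = ?V"
  proof (cases "card ?V \<le> 2")
    case True
    then obtain W where "?V \<subseteq> W" "W \<subseteq> a ` E" "card W = 2"
      using exists_subset_between[OF True assms(5) _ fin] by blast
    then show ?thesis using that by simp
  next
    case False
    then show ?thesis using that[of ?V] by auto
  qed
  obtain E' where E': "E' \<subseteq> E" "card E' + card W = card E"
    "\<And>x. mult_on a E' x = mult_on a E x - of_bool (x \<in> W)"
    "W + Sigma_on (k - 1) a E' \<subseteq> Sigma_on (Suc (k - 1)) a E"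
    using obtain_subsequence_dropping_values[OF assms(1) W(2)] by metis
  have "mult_on a E' x \<le> k - 1" for x
  proof (cases "x \<in> W")
    case False
    then have "mult_on a E x \<noteq> k"
      using W(1) mult_on_pos_iff[OF assms(1), of a x] assms(2) by auto
    then show ?thesis using E'(3)[of x] assms(4)[of x] False by simp
  qed (use E'(3) assms(4) diff_le_mono in simp)
  moreover have "k \<le> card E'" if "3 \<le> card W"
  proof -
    have "card W * k \<le> card E"
      using W(4)[OF that] assms(1) by (intro card_mult_le_card[where a = a]) auto
    moreover have "3 * (k - 1) \<le> card W * (k - 1)" using that by (rule mult_le_mono1)
    ultimately show ?thesis using E'(2) assms(2) by (simp add: diff_mult_distrib2)
  qed
  moreover have "finite E'" using E'(1) assms(1) by (rule finite_subset)
  ultimately show ?thesis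
    using that W(2,3) E'(2,4) assms(2) by (simp add: Suc_diff_le)
qed

lemma exists_progression_if_critical_triple:
  fixes A W Z :: "'a::ab_group_add set"
  assumes "finite A" "finite W" "finite Z" "2 \<le> card A" "2 \<le> card W" "Z \<noteq> {}"
    and "3 \<le> card W \<Longrightarrow> 2 \<le> card Z"
    and "card (A + (W + Z)) + 2 \<le> card A + card W + card Z"
    and "enat (card (A + (W + Z))) < pG TYPE('a)"
  shows "\<exists>d. d \<noteq> 0 \<and> is_progression d A"
proof -
  have ne: "A \<noteq> {}" "W \<noteq> {}" using assms(4,5) by auto
  note critical = critical_pairs_of_critical_triple[OF assms(1-3) ne(2) assms(6,4,8,9)]
  obtain a0 z0 where "a0 \<in> A" "z0 \<in> Z" using ne(1) assms(6) by blast
  then have "card W \<le> card (A + W)" "card (A + W) \<le> card (A + W + Z)"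
    using assms(1-3) by (simp_all add: card_le_card_set_plus card_le_card_set_plus_right finite_set_plus)
  then have ltW: "enat (card W) < pG TYPE('a)" and ltAW: "enat (card (A + W)) < pG TYPE('a)"
    using assms(9) by (simp_all add: add.assoc enat_le_less_trans)
  obtain d where "d \<noteq> 0" "is_progression d W"
  proof (cases "card W = 2")
    case True
    with ltW have "enat 2 < pG TYPE('a)" by simp
    then show ?thesis using obtain_progression_card_two[OF True] that by blast
  next
    case False
    then show ?thesis using vosper[OF assms(2,3,5) _ critical(2,3)] assms(5,7) that by force
  qed
  with assms(5,1) ne(1) critical(1) ltAW show ?thesis
    using is_progression_if_card_set_plus_le by blast
qed

lemma exists_progression_if_critical_Sigma_on_one:
  fixes a :: "nat \<Rightarrow> 'a::ab_group_add"
  assumes "finite A" "2 \<le> card A" "finite E" "2 \<le> card E" "\<And>x. mult_on a E x \<le> 1"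
    and "card (A + Sigma_on 1 a E) + 1 \<le> card A + card E"
    and "enat (card (A + Sigma_on 1 a E) + 1) < pG TYPE('a)"
  shows "\<exists>d. d \<noteq> 0 \<and> is_progression d A"
proof -
  have "card (a ` E) = card E"
    using inj_on_if_mult_on_le_one[OF assms(3,5)] by (rule card_image)
  then show ?thesis
    using vosper[OF assms(1) _ assms(2), of "a ` E"] assms(3,4) assms(6,7)[unfolded Sigma_on_one]
    by auto
qed

lemma exists_progression_if_critical_Sigma_on:
  fixes a :: "nat \<Rightarrow> 'a::ab_group_add"
  assumes "finite A" "2 \<le> card A" "finite E" "2 \<le> k" "k < card E"
    and "\<And>x. mult_on a E x \<le> k" "2 \<le> card (a ` E)"
    and "card (A + Sigma_on k a E) + k \<le> card A + card E"
    and "enat (card (A + Sigma_on k a E)) < pG TYPE('a)"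
  shows "\<exists>d. d \<noteq> 0 \<and> is_progression d A"
proof -
  obtain W E' where W: "W \<subseteq> a ` E" "2 \<le> card W" "finite E'" "card E' + card W = card E"
    "\<And>x. mult_on a E' x \<le> k - 1" "W + Sigma_on (k - 1) a E' \<subseteq> Sigma_on k a E"
    "3 \<le> card W \<Longrightarrow> k \<le> card E'"
    using obtain_critical_splitting[OF assms(3-7)] by blast
  let ?Z = "Sigma_on (k - 1) a E'"
  have fin: "finite W" "finite ?Z"
    using W(1,3) assms(3) finite_subset by (auto intro: finite_Sigma_on)
  have "k - 1 \<le> card E'"
    using W(2,4,7) assms(5) by (cases "3 \<le> card W") linarith+
  then obtain a0 w0 where "a0 \<in> A" "w0 \<in> W" "?Z \<noteq> {}"
    using assms(2) W(2) Sigma_on_nonempty by fastforce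
  then have "card ?Z \<le> card (W + ?Z)" "card (W + ?Z) \<le> card (A + (W + ?Z))"
    using fin assms(1) by (simp_all add: card_le_card_set_plus_right finite_set_plus)
  moreover have "A + (W + ?Z) \<subseteq> A + Sigma_on k a E"
    using W(6) by (intro set_plus_mono2) simp_all
  then have le: "card (A + (W + ?Z)) \<le> card (A + Sigma_on k a E)"
    using assms(1,3) by (intro card_mono) (simp_all add: finite_set_plus finite_Sigma_on)
  then have lt: "enat (card (A + (W + ?Z))) < pG TYPE('a)"
    using assms(9) by (rule enat_le_less_trans)
  ultimately have lower: "card E' + 1 \<le> card ?Z + (k - 1)"
    using W(3,5) \<open>k - 1 \<le> card E'\<close> assms(4)
    by (intro card_Sigma_on_lower_bound) (auto intro: enat_le_less_trans)
  show ?thesis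
  proof (rule exists_progression_if_critical_triple[OF assms(1) fin assms(2) W(2) \<open>?Z \<noteq> {}\<close> _ _ lt])
    show "2 \<le> card ?Z" if "3 \<le> card W" using W(7)[OF that] lower assms(4) by linarith
    show "card (A + (W + ?Z)) + 2 \<le> card A + card W + card ?Z"
      using lower W(4) le assms(4,8) by linarith
  qed
qed

lemma exists_progression_if_card_Sigma_on_critical:
  fixes a :: "nat \<Rightarrow> 'a::ab_group_add"
  assumes "finite J" "2 \<le> l" "\<And>x. mult_on a J x \<le> l" "card (a ` J) + l \<le> card J"
    and "2 \<le> card {x \<in> a ` J. 2 \<le> mult_on a J x}"
    and "card (Sigma_on l a J) + l \<le> card J + 1"
    and "enat (card (Sigma_on l a J)) < (if l = 2 then pG TYPE('a) - 1 else pG TYPE('a))"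
  shows "\<exists>d. d \<noteq> 0 \<and> is_progression d (a ` J)"
proof -
  let ?A = "a ` J"
  obtain E where E: "E \<subseteq> J" "card E + card ?A = card J"
    "\<And>x. mult_on a E x = mult_on a J x - of_bool (x \<in> ?A)"
    "?A + Sigma_on (l - 1) a E \<subseteq> Sigma_on (Suc (l - 1)) a J"
    using obtain_subsequence_dropping_values[OF assms(1) subset_refl] by metis
  have fin: "finite ?A" "finite E" using assms(1) E(1) finite_subset by auto
  have mult_E: "mult_on a E x = mult_on a J x - 1" for x
    using E(3)[of x] mult_on_pos_iff[OF assms(1), of a x] by (cases "x \<in> ?A") simp_all
  then have mult_E_le: "mult_on a E x \<le> l - 1" for x
    using assms(3) diff_le_mono by presburger
  have "{x \<in> ?A. 2 \<le> mult_on a J x} \<subseteq> a ` E"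
    using mult_E mult_on_pos_iff[OF fin(2), of a] by fastforce
  then have card_aE: "2 \<le> card (a ` E)"
    using assms(5) card_mono[of "a ` E"] fin(2) by (meson finite_imageI le_trans)
  have card_A: "2 \<le> card ?A"
    using assms(5) card_mono[OF fin(1), of "{x \<in> ?A. 2 \<le> mult_on a J x}"] by auto
  have le: "card (?A + Sigma_on (l - 1) a E) \<le> card (Sigma_on l a J)"
    using E(4) assms(1,2) by (intro card_mono) (simp_all add: finite_Sigma_on Suc_diff_le)
  have crit: "card (?A + Sigma_on (l - 1) a E) + (l - 1) \<le> card ?A + card E"
    using le assms(2,6) E(2) by linarith
  show ?thesis
  proof (cases "l = 2")
    case True
    then have "enat (card (Sigma_on l a J) + 1) < pG TYPE('a)"
      using assms(7) by (simp add: enat_Suc_less_if_less_minus_one)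
    moreover have "card (?A + Sigma_on (l - 1) a E) + 1 \<le> card (Sigma_on l a J) + 1"
      using le by simp
    ultimately have "enat (card (?A + Sigma_on (l - 1) a E) + 1) < pG TYPE('a)"
      by (rule enat_le_less_trans[rotated])
    then show ?thesis
      using exists_progression_if_critical_Sigma_on_one[OF fin(1) card_A fin(2), where a = a] True crit
        mult_E_le card_aE card_image_le[OF fin(2), of a] by simp
  next
    case False
    have "enat (card (?A + Sigma_on (l - 1) a E)) < pG TYPE('a)"
      using le assms(7) False by (simp add: enat_le_less_trans)
    then show ?thesis
      using exists_progression_if_critical_Sigma_on[OF fin(1) card_A fin(2), of "l - 1" a]
        False assms(2,4) E(2) crit mult_E_le card_aE by simp
  qed
qed

lemma arith_prog_if_is_progression:
  fixes d :: "'a::ab_group_add"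
  assumes "d \<noteq> 0" "is_progression d A"
  shows "arith_prog A"
proof -
  obtain c where "A = progression c d (card A)"
    using assms(2) unfolding is_progression_def by blast
  then have "A = {((\<lambda>x. x + d) ^^ j) c | j. j < card A}"
    by (auto simp: progression_def funpow_add_right_eq_nsmul)
  then show ?thesis unfolding arith_prog_def using assms(1) by blast
qed

lemma sum_mult_on_add_card_image_le:
  assumes "finite J" "T \<subseteq> a ` J"
  shows "(\<Sum>x\<in>T. mult_on a J x) + card (a ` J) \<le> card J + card T"
proof -
  have "card (a ` J - T) \<le> (\<Sum>x\<in>a ` J - T. mult_on a J x)"
    using assms(1) sum_mono[of "a ` J - T" "\<lambda>_. 1" "mult_on a J"]
    by (simp add: Suc_le_eq mult_on_pos_iff)
  moreover have "(\<Sum>x\<in>a ` J. mult_on a J x) = (\<Sum>x\<in>T. mult_on a J x) + (\<Sum>x\<in>a ` J - T. mult_on a J x)"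
    using assms by (simp add: sum.subset_diff)
  moreover have "card (a ` J) = card (a ` J - T) + card T"
    using assms by (simp add: card_Diff_subset card_mono finite_subset)
  ultimately show ?thesis using sum_mult_on_image[OF assms(1), of a] by linarith
qed

theorem theorem6p9:
  fixes a :: "nat \<Rightarrow> 'a::ab_group_add" and l m :: nat
  assumes "1 \<le> l" and "1 \<le> m" and "l + 2 \<le> m"
  defines "A \<equiv> a ` {1..m}"
  defines "X \<equiv> {x \<in> A. mu l a m x \<ge> 2}"
  defines "P \<equiv> (\<lambda>t. \<exists>T. T \<subseteq> X \<and> card T = t \<and> (\<Sum>x\<in>T. rho a m x) \<ge> l + t)"
  assumes "card X \<ge> 2"
  and "\<exists>t\<ge>2. P t \<and> (\<forall>s. 0 < s \<and> s < t \<longrightarrow> \<not> P s)"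
  and "int (card (Sigma_l l a m)) = int (\<Sum>x\<in>A. mu l a m x) - int l + 1"
  and "enat (card (Sigma_l l a m)) < (if l = 2 then pG TYPE('a) - 1 else pG TYPE('a))"
  shows "arith_prog A"
proof -
  define J where "J = {1..m}"
  have fin: "finite J" and AJ: "A = a ` J" and rho: "rho a m = mult_on a J"
    and Sigma: "Sigma_l l a m = Sigma_on l a J"
    by (auto simp: J_def A_def rho_def mult_on_def Sigma_l_def Sigma_on_def)
  obtain t where t: "2 \<le> t" "P t" "\<And>s. 0 < s \<Longrightarrow> s < t \<Longrightarrow> \<not> P s"
    using assms(8) by blast
  obtain x0 where "x0 \<in> X" using assms(7) by fastforce
  then have "2 \<le> l" by (simp add: X_def mu_def)
  have mult_le: "mult_on a J x \<le> l" for x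
  proof (rule ccontr)
    assume "\<not> ?thesis"
    then have "x \<in> X" "l + 1 \<le> rho a m x"
      using \<open>2 \<le> l\<close> mult_on_pos_iff[OF fin, of a x] by (simp_all add: X_def AJ mu_def rho)
    then have "P 1" unfolding P_def by (intro exI[of _ "{x}"]) simp
    with t(3)[of 1] t(1) show False by simp
  qed
  then have mu: "mu l a m = mult_on a J" by (simp add: fun_eq_iff mu_def rho)
  have "(\<Sum>x\<in>A. mu l a m x) = card J"
    using sum_mult_on_image[OF fin, of a] by (simp add: mu AJ)
  then have "int (card (Sigma_on l a J)) = int (card J) - int l + 1"
    using assms(9) by (simp only: Sigma)
  then have "card (Sigma_on l a J) + l = card J + 1"
    using assms(3) by (simp add: J_def)
  moreover obtain T where T: "T \<subseteq> X" "card T = t" "l + t \<le> (\<Sum>x\<in>T. mult_on a J x)"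
    using t(2) by (auto simp: P_def rho)
  have "T \<subseteq> a ` J" using T(1) by (auto simp: X_def AJ)
  then have "card A + l \<le> card J"
    using sum_mult_on_add_card_image_le[OF fin, of T a] T(2,3) by (simp add: AJ)
  moreover have "X = {x \<in> a ` J. 2 \<le> mult_on a J x}" by (simp add: X_def AJ mu)
  ultimately obtain d where "d \<noteq> 0" "is_progression d A"
    using exists_progression_if_card_Sigma_on_critical[OF fin \<open>2 \<le> l\<close> mult_le] assms(7,10)
    by (auto simp: AJ Sigma)
  then show ?thesis by (rule arith_prog_if_is_progression)
qed

end
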